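(* Let $\phi:\mathcal M_1\to\mathcal M_2$ be a homomorphism of local Moufang sets, $\mathcal M_1=(X,(U_x))$, $\mathcal M_2=(Y,(V_y))$. (i) For each $x\in X$ there is a unique map $\theta_x:U_x\to V_{x\phi}$ with $(zu)\phi=(z\phi)\theta_x(u)$ for all $z\in X$, $u\in U_x$, and $\theta_x$ is a group homomorphism. (ii) If $x\in X$, $u\in U_x$, $v\in V_{x\phi}$ and there is $x'\in X\setminus\overline x$ with $(x'u)\phi=(x'\phi)v$, then $v=\theta_x(u)$. Suppose moreover that bases $(0,\infty)$ of $X$ and $(0',\infty')$ of $Y$ are chosen with $0\phi=0'$, $\infty\phi=\infty'$. Then (iii) for $x\not\sim\infty$, $\theta_\infty(\alpha_x)=\alpha_{x\phi}$ and $(-x)\phi=-(x\phi)$; (iv) if $x$ is a unit then $x\phi$ is a unit, $\mu_x\phi=\phi\mu_{x\phi}$, and if $\mu_x=g\alpha_xh$ with $g,h\in U_0$ then $\mu_{x\phi}=\theta_0(g)\alpha_{x\phi}\theta_0(h)$; (v) if $x$ is a unit then $\tilde x\phi=\widetilde{x\phi}$, where $\tilde y:=-((-y)\mu_y)$; (vi) $H_1\phi\subseteq\phi H_2$, where $H_1,H_2$ are the Hua subgroups of $\mathcal M_1,\mathcal M_2$.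
   Context: Group actions are right actions; maps are composed left to right, so $u\phi$ means first $u$ then $\phi$. For $(X,\sim)$, $\overline x$ is the class of $x$, $\overline X$ the set of classes, $\mathrm{Sym}(X,\sim)$ the bijections $g$ with $x\sim y\iff xg\sim yg$, $\overline U$ the induced group on $\overline X$. A local Moufang set is $(X,\sim)$ with $|\overline X|>2$ and subgroups $U_x\le\mathrm{Sym}(X,\sim)$ ($x\in X$) with: (LM0) $x\sim y\Rightarrow\overline{U_x}=\overline{U_y}$; (LM1) $U_x$ fixes $x$ and is sharply transitive on $X\setminus\overline x$; (LM1') $\overline{U_x}$ fixes $\overline x$ and is sharply transitive on $\overline X\setminus\{\overline x\}$; (LM2) $U_x^g=U_{xg}$ for all $x$ and all $g\in G:=\langle U_y\rangle$, where $g^h=h^{-1}gh$. A homomorphism $\mathcal M_1=(X,(U_x))\to\mathcal M_2=(Y,(V_y))$ is a map $\phi:X\to Y$ such that $x\sim x'\iff x\phi\sim x'\phi$ for all $x,x'\in X$, and $U_x\phi\subseteq\phi V_{x\phi}$ for all $x$ (i.e. for every $u\in U_x$ there is $v\in V_{x\phi}$ with $u\phi=\phi v$). Given a basis $(0,\infty)$ (two inequivalent points): $\alpha_x$ ($x\not\sim\infty$) is the unique element of $U_\infty$ with $0\alpha_x=x$; $-x:=0\alpha_x^{-1}$; a unit is $x$ with $x\not\sim0,\infty$; $\mu_x$ is the unique element of $U_0\alpha_xU_0$ swapping $0,\infty$; the Hua subgroup is $H=\langle\mu_x\mu_y\mid x,y\text{ units}\rangle$. *)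

theory Defs
  imports "HOL-Library.FuncSet"
begin

text \<open>The point set X of a local Moufang set is represented by a type 'a
  (X = UNIV); the equivalence is sim.
  Groups act on the right: x g is written g x, and the product g h ("first g, then h")
  is the function h \<circ> g.\<close>

definition cls :: "('a \<Rightarrow> 'a \<Rightarrow> bool) \<Rightarrow> 'a \<Rightarrow> 'a set" where
  "cls sim x = {y. sim x y}"

definition classes :: "('a \<Rightarrow> 'a \<Rightarrow> bool) \<Rightarrow> 'a set set" where
  "classes sim = range (cls sim)"

definition SymRel :: "('a \<Rightarrow> 'a \<Rightarrow> bool) \<Rightarrow> ('a \<Rightarrow> 'a) set" where
  "SymRel sim = {g. bij g \<and> (\<forall>x y. sim x y \<longleftrightarrow> sim (g x) (g y))}"

definition ind :: "('a \<Rightarrow> 'a \<Rightarrow> bool) \<Rightarrow> ('a \<Rightarrow> 'a) \<Rightarrow> ('a set \<Rightarrow> 'a set)" where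
  "ind sim g = restrict (\<lambda>C. g ` C) (classes sim)"

definition perm_subgroup :: "('a \<Rightarrow> 'a) set \<Rightarrow> bool" where
  "perm_subgroup S \<longleftrightarrow> (\<forall>g\<in>S. bij g) \<and> id \<in> S \<and>
     (\<forall>g\<in>S. \<forall>h\<in>S. h \<circ> g \<in> S) \<and> (\<forall>g\<in>S. inv g \<in> S)"

inductive_set gen :: "('a \<Rightarrow> 'a) set \<Rightarrow> ('a \<Rightarrow> 'a) set" for S where
  gen_id: "id \<in> gen S"
| gen_base: "g \<in> S \<Longrightarrow> g \<in> gen S"
| gen_mult: "g \<in> gen S \<Longrightarrow> h \<in> gen S \<Longrightarrow> h \<circ> g \<in> gen S"
| gen_inv: "g \<in> gen S \<Longrightarrow> inv g \<in> gen S"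

definition local_moufang :: "('a \<Rightarrow> 'a \<Rightarrow> bool) \<Rightarrow> ('a \<Rightarrow> ('a \<Rightarrow> 'a) set) \<Rightarrow> bool" where
  "local_moufang sim U \<longleftrightarrow>
     equivp sim \<and>
     \<not> (finite (classes sim) \<and> card (classes sim) \<le> 2) \<and>
     (\<forall>x. perm_subgroup (U x) \<and> U x \<subseteq> SymRel sim) \<and>
     \<comment> \<open>LM0\<close>
     (\<forall>x y. sim x y \<longrightarrow> ind sim ` U x = ind sim ` U y) \<and>
     \<comment> \<open>LM1\<close>
     (\<forall>x. (\<forall>u\<in>U x. u x = x) \<and>
          (\<forall>y z. y \<notin> cls sim x \<longrightarrow> z \<notin> cls sim x \<longrightarrow> (\<exists>!u. u \<in> U x \<and> u y = z))) \<and>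
     \<comment> \<open>LM1'\<close>
     (\<forall>x. (\<forall>f\<in>ind sim ` U x. f (cls sim x) = cls sim x) \<and>
          (\<forall>C\<in>classes sim. \<forall>D\<in>classes sim. C \<noteq> cls sim x \<longrightarrow> D \<noteq> cls sim x \<longrightarrow>
              (\<exists>!f. f \<in> ind sim ` U x \<and> f C = D))) \<and>
     \<comment> \<open>LM2\<close>
     (\<forall>x. \<forall>g\<in>gen (\<Union>y. U y). (\<lambda>u. g \<circ> u \<circ> inv g) ` U x = U (g x))"

text \<open>Homomorphism of local Moufang sets: u phi = phi v means phi \<circ> u = v \<circ> phi.\<close>
definition lm_hom :: "('a \<Rightarrow> 'a \<Rightarrow> bool) \<Rightarrow> ('a \<Rightarrow> ('a \<Rightarrow> 'a) set) \<Rightarrow>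
    ('b \<Rightarrow> 'b \<Rightarrow> bool) \<Rightarrow> ('b \<Rightarrow> ('b \<Rightarrow> 'b) set) \<Rightarrow> ('a \<Rightarrow> 'b) \<Rightarrow> bool" where
  "lm_hom sim1 U sim2 V phi \<longleftrightarrow>
     local_moufang sim1 U \<and> local_moufang sim2 V \<and>
     (\<forall>x x'. sim1 x x' \<longleftrightarrow> sim2 (phi x) (phi x')) \<and>
     (\<forall>x. \<forall>u\<in>U x. \<exists>v\<in>V (phi x). phi \<circ> u = v \<circ> phi)"

definition theta_prop :: "('a \<Rightarrow> ('a \<Rightarrow> 'a) set) \<Rightarrow> ('b \<Rightarrow> ('b \<Rightarrow> 'b) set) \<Rightarrow> ('a \<Rightarrow> 'b) \<Rightarrow> 'a
    \<Rightarrow> (('a \<Rightarrow> 'a) \<Rightarrow> ('b \<Rightarrow> 'b)) \<Rightarrow> bool" where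
  "theta_prop U V phi x th \<longleftrightarrow> th \<in> U x \<rightarrow>\<^sub>E V (phi x) \<and>
     (\<forall>z. \<forall>u\<in>U x. phi (u z) = th u (phi z))"

definition theta :: "('a \<Rightarrow> ('a \<Rightarrow> 'a) set) \<Rightarrow> ('b \<Rightarrow> ('b \<Rightarrow> 'b) set) \<Rightarrow> ('a \<Rightarrow> 'b) \<Rightarrow> 'a
    \<Rightarrow> (('a \<Rightarrow> 'a) \<Rightarrow> ('b \<Rightarrow> 'b))" where
  "theta U V phi x = (THE th. theta_prop U V phi x th)"

definition alpha :: "('a \<Rightarrow> ('a \<Rightarrow> 'a) set) \<Rightarrow> 'a \<Rightarrow> 'a \<Rightarrow> 'a \<Rightarrow> ('a \<Rightarrow> 'a)" where
  "alpha U p0 pinf x = (THE a. a \<in> U pinf \<and> a p0 = x)"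

definition neg :: "('a \<Rightarrow> ('a \<Rightarrow> 'a) set) \<Rightarrow> 'a \<Rightarrow> 'a \<Rightarrow> 'a \<Rightarrow> 'a" where
  "neg U p0 pinf x = inv (alpha U p0 pinf x) p0"

definition is_unit :: "('a \<Rightarrow> 'a \<Rightarrow> bool) \<Rightarrow> 'a \<Rightarrow> 'a \<Rightarrow> 'a \<Rightarrow> bool" where
  "is_unit sim p0 pinf x \<longleftrightarrow> \<not> sim x p0 \<and> \<not> sim x pinf"

text \<open>mu_x: the unique element of U_0 alpha_x U_0 (products g alpha_x h = h \<circ> alpha_x \<circ> g)
  swapping p0 and pinf\<close>
definition mu :: "('a \<Rightarrow> ('a \<Rightarrow> 'a) set) \<Rightarrow> 'a \<Rightarrow> 'a \<Rightarrow> 'a \<Rightarrow> ('a \<Rightarrow> 'a)" where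
  "mu U p0 pinf x = (THE m. (\<exists>g\<in>U p0. \<exists>h\<in>U p0. m = h \<circ> alpha U p0 pinf x \<circ> g) \<and>
      m p0 = pinf \<and> m pinf = p0)"

definition tilde :: "('a \<Rightarrow> ('a \<Rightarrow> 'a) set) \<Rightarrow> 'a \<Rightarrow> 'a \<Rightarrow> 'a \<Rightarrow> 'a" where
  "tilde U p0 pinf y = neg U p0 pinf (mu U p0 pinf y (neg U p0 pinf y))"

text \<open>Hua subgroup: generated by the products mu_x mu_y (= mu_y \<circ> mu_x)\<close>
definition hua :: "('a \<Rightarrow> 'a \<Rightarrow> bool) \<Rightarrow> ('a \<Rightarrow> ('a \<Rightarrow> 'a) set) \<Rightarrow> 'a \<Rightarrow> 'a \<Rightarrow> ('a \<Rightarrow> 'a) set" where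
  "hua sim U p0 pinf = gen {mu U p0 pinf y \<circ> mu U p0 pinf x | x y.
      is_unit sim p0 pinf x \<and> is_unit sim p0 pinf y}"

end

theory Submission
  imports Defs
begin

text \<open>An element of \<open>V y\<close> is determined by its value at one point outside the class of
  \<open>y\<close>, and \<open>phi\<close> maps points inequivalent to \<open>x\<close> to points inequivalent to \<open>phi x\<close>. So the
  \<open>v \<in> V (phi x)\<close> with \<open>phi \<circ> u = v \<circ> phi\<close> is unique: this gives (i) and (ii), and
  multiplicativity of \<open>theta\<close> follows by comparing values at one such point. With matched
  bases, \<open>theta pinf (alpha x)\<close> lies in \<open>V (phi pinf)\<close> and maps \<open>phi p0\<close> to \<open>phi x\<close>, so it is
  \<open>alpha (phi x)\<close>. If \<open>mu x = h \<circ> alpha x \<circ> g\<close> with \<open>g, h \<in> U p0\<close>, then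
  \<open>theta p0 h \<circ> alpha (phi x) \<circ> theta p0 g\<close> lies in the corresponding double coset of
  \<open>V (phi p0)\<close> and is intertwined with \<open>mu x\<close> by \<open>phi\<close>; hence it swaps \<open>phi p0\<close> and \<open>phi pinf\<close>
  and is \<open>mu (phi x)\<close>, which gives (iv) and (v). Bijections intertwined by \<open>phi\<close> with
  elements of a generated group are closed under products and inverses, so (vi) follows from
  (iv) for the generators \<open>mu y \<circ> mu x\<close> of the Hua subgroup.\<close>

lemma SymRel_comp: "g \<in> SymRel sim \<Longrightarrow> h \<in> SymRel sim \<Longrightarrow> h \<circ> g \<in> SymRel sim"
  by (simp add: SymRel_def bij_comp)

lemma gen_bij:
  assumes "\<And>s. s \<in> S \<Longrightarrow> bij s" and "g \<in> gen S"
  shows "bij g"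
  using assms(2) by (induction g rule: gen.induct) (blast intro: assms(1) bij_id bij_comp bij_imp_bij_inv)+

lemma intertwining_inv:
  assumes "bij g" "bij g'" "f \<circ> g = g' \<circ> f"
  shows "f \<circ> inv g = inv g' \<circ> f"
proof -
  have "inv g' \<circ> f = inv g' \<circ> (f \<circ> g) \<circ> inv g"
    using assms(1) by (simp add: fun_eq_iff bij_is_surj surj_f_inv_f)
  also have "\<dots> = f \<circ> inv g"
    using assms(2,3) by (simp add: o_assoc bij_is_inj inv_o_cancel)
  finally show ?thesis ..
qed

lemma gen_intertwining:
  assumes bijS: "\<And>s. s \<in> S \<Longrightarrow> bij s" and bijT: "\<And>t. t \<in> T \<Longrightarrow> bij t"
    and gens: "\<And>s. s \<in> S \<Longrightarrow> \<exists>t\<in>T. f \<circ> s = t \<circ> f"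
    and "g \<in> gen S"
  shows "\<exists>g'\<in>gen T. f \<circ> g = g' \<circ> f"
  using \<open>g \<in> gen S\<close>
proof (induction g rule: gen.induct)
  case gen_id
  show ?case using gen.gen_id by (metis id_comp comp_id)
next
  case (gen_base s)
  then show ?case using gens gen.gen_base by blast
next
  case (gen_mult g h)
  then obtain g' h' where "g' \<in> gen T" "f \<circ> g = g' \<circ> f" "h' \<in> gen T" "f \<circ> h = h' \<circ> f"
    by blast
  then show ?case by (metis gen.gen_mult o_assoc)
next
  case (gen_inv g)
  then obtain g' where "g' \<in> gen T" "f \<circ> g = g' \<circ> f" by blast
  moreover have "bij g" "bij g'"
    using gen_inv.hyps \<open>g' \<in> gen T\<close> bijS bijT by (blast intro: gen_bij)+
  ultimately show ?case by (metis gen.gen_inv intertwining_inv)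
qed

locale local_moufang_set =
  fixes sim :: "'a \<Rightarrow> 'a \<Rightarrow> bool" and U :: "'a \<Rightarrow> ('a \<Rightarrow> 'a) set"
  assumes local_moufang: "local_moufang sim U"
begin

lemma equivp: "equivp sim"
  using local_moufang by (simp add: local_moufang_def)

lemma sim_sym: "sim a b \<Longrightarrow> sim b a"
  using equivp by (rule equivp_symp)

lemma root_group_SymRel: "u \<in> U x \<Longrightarrow> u \<in> SymRel sim"
  using local_moufang by (simp add: local_moufang_def subset_iff)

lemma root_group_bij: "u \<in> U x \<Longrightarrow> bij u"
  using root_group_SymRel unfolding SymRel_def by blast

lemma root_group_sim_iff: "u \<in> U x \<Longrightarrow> sim (u a) (u b) \<longleftrightarrow> sim a b"
  using root_group_SymRel unfolding SymRel_def by blast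

lemma root_group_fixes: "u \<in> U x \<Longrightarrow> u x = x"
  using local_moufang by (simp add: local_moufang_def)

lemma root_group_comp: "u \<in> U x \<Longrightarrow> v \<in> U x \<Longrightarrow> v \<circ> u \<in> U x"
  using local_moufang by (simp add: local_moufang_def perm_subgroup_def)

lemma root_group_sharply_transitive:
  "\<not> sim x y \<Longrightarrow> \<not> sim x z \<Longrightarrow> \<exists>!u. u \<in> U x \<and> u y = z"
  using local_moufang by (simp add: local_moufang_def cls_def)

lemma root_group_eqI:
  assumes "u \<in> U x" "v \<in> U x" "\<not> sim x y" "u y = v y"
  shows "u = v"
proof -
  have "\<not> sim x (u y)"
    using root_group_sim_iff[of u x x y] root_group_fixes[of u x] assms(1,3) by simp
  then have "\<exists>!w. w \<in> U x \<and> w y = u y"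
    by (rule root_group_sharply_transitive[OF assms(3)])
  then show ?thesis
    using the1_equality assms by metis
qed

lemma exists_not_sim: "\<exists>z. \<not> sim x z"
proof (rule ccontr)
  assume "\<not> (\<exists>z. \<not> sim x z)"
  then have "sim z y" for z y
    using equivp by (meson equivp_symp equivp_transp)
  then have "classes sim = {UNIV}"
    by (auto simp: classes_def cls_def)
  then show False
    using local_moufang by (simp add: local_moufang_def)
qed

end

definition is_mu :: "('a \<Rightarrow> ('a \<Rightarrow> 'a) set) \<Rightarrow> 'a \<Rightarrow> 'a \<Rightarrow> 'a \<Rightarrow> ('a \<Rightarrow> 'a) \<Rightarrow> bool" where
  "is_mu U p0 pinf x m \<longleftrightarrow> (\<exists>g\<in>U p0. \<exists>h\<in>U p0. m = h \<circ> alpha U p0 pinf x \<circ> g) \<and>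
     m p0 = pinf \<and> m pinf = p0"

lemma mu_is_the_mu: "mu U p0 pinf x = (THE m. is_mu U p0 pinf x m)"
  by (simp add: mu_def is_mu_def)

definition hua_generators :: "('a \<Rightarrow> 'a \<Rightarrow> bool) \<Rightarrow> ('a \<Rightarrow> ('a \<Rightarrow> 'a) set) \<Rightarrow> 'a \<Rightarrow> 'a \<Rightarrow> ('a \<Rightarrow> 'a) set"
  where "hua_generators sim U p0 pinf = {mu U p0 pinf y \<circ> mu U p0 pinf x | x y.
    is_unit sim p0 pinf x \<and> is_unit sim p0 pinf y}"

lemma hua_gen_hua_generators: "hua sim U p0 pinf = gen (hua_generators sim U p0 pinf)"
  by (simp add: hua_def hua_generators_def)

locale local_moufang_basis = local_moufang_set +
  fixes p0 pinf :: 'a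
  assumes basis: "\<not> sim p0 pinf"
begin

lemma alpha_ex1: "\<not> sim x pinf \<Longrightarrow> \<exists>!a. a \<in> U pinf \<and> a p0 = x"
  using root_group_sharply_transitive basis sim_sym by blast

lemma alpha_mem: "\<not> sim x pinf \<Longrightarrow> alpha U p0 pinf x \<in> U pinf"
  and alpha_zero: "\<not> sim x pinf \<Longrightarrow> alpha U p0 pinf x p0 = x"
  unfolding alpha_def using theI'[OF alpha_ex1] by simp_all

lemma alpha_eqI: "\<not> sim x pinf \<Longrightarrow> a \<in> U pinf \<Longrightarrow> a p0 = x \<Longrightarrow> alpha U p0 pinf x = a"
  unfolding alpha_def by (rule the1_equality[OF alpha_ex1]) simp_all

lemma alpha_neg:
  assumes "\<not> sim x pinf"
  shows "alpha U p0 pinf x (neg U p0 pinf x) = p0"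
proof -
  have "bij (alpha U p0 pinf x)" using assms alpha_mem root_group_bij by blast
  then show ?thesis by (simp add: neg_def bij_is_surj surj_f_inv_f)
qed

lemma is_unit_neg:
  assumes "is_unit sim p0 pinf x"
  shows "is_unit sim p0 pinf (neg U p0 pinf x)"
proof -
  let ?a = "alpha U p0 pinf x"
  have "\<not> sim x pinf" using assms by (simp add: is_unit_def)
  then have "sim (neg U p0 pinf x) y \<longleftrightarrow> sim p0 (?a y)" for y
    using root_group_sim_iff[OF alpha_mem] alpha_neg by metis
  then show ?thesis
    using assms basis alpha_zero root_group_fixes[OF alpha_mem] \<open>\<not> sim x pinf\<close>
    by (auto simp: is_unit_def dest: sim_sym)
qed

lemma is_mu_exists:
  assumes "is_unit sim p0 pinf x"
  shows "\<exists>m. is_mu U p0 pinf x m"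
proof -
  let ?a = "alpha U p0 pinf x"
  have x: "\<not> sim p0 x" "\<not> sim x pinf" using assms sim_sym by (auto simp: is_unit_def)
  have "\<not> sim p0 (neg U p0 pinf x)"
    using is_unit_neg[OF assms] sim_sym by (auto simp: is_unit_def)
  then obtain g h where "g \<in> U p0" "g pinf = neg U p0 pinf x" "h \<in> U p0" "h x = pinf"
    using root_group_sharply_transitive basis x(1) by metis
  moreover from this have "g p0 = p0" "h p0 = p0" by (simp_all add: root_group_fixes)
  ultimately have "is_mu U p0 pinf x (h \<circ> ?a \<circ> g)"
    unfolding is_mu_def using alpha_mem alpha_zero alpha_neg x(2) by auto
  then show ?thesis by blast
qed

lemma is_mu_unique:
  assumes "is_unit sim p0 pinf x" "is_mu U p0 pinf x m" "is_mu U p0 pinf x m'"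
  shows "m = m'"
proof -
  let ?a = "alpha U p0 pinf x"
  have x: "\<not> sim p0 x" "\<not> sim x pinf" using assms(1) sim_sym by (auto simp: is_unit_def)
  have a: "?a \<in> U pinf" "?a p0 = x" using alpha_mem alpha_zero x(2) by simp_all
  obtain g h g' h' where gh: "g \<in> U p0" "h \<in> U p0" "m = h \<circ> ?a \<circ> g"
    and gh': "g' \<in> U p0" "h' \<in> U p0" "m' = h' \<circ> ?a \<circ> g'"
    and swap: "m p0 = pinf" "m pinf = p0" "m' p0 = pinf" "m' pinf = p0"
    using assms(2,3) unfolding is_mu_def by blast
  \<comment> \<open>\<open>h\<close> is pinned down by \<open>h x = pinf\<close>, and then \<open>g\<close> by \<open>alpha x (g pinf) = p0\<close>\<close>
  have "h x = h' x"
    using gh gh' swap a(2) root_group_fixes[OF gh(1)] root_group_fixes[OF gh'(1)] by simp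
  then have "h = h'" by (rule root_group_eqI[OF gh(2) gh'(2) x(1)])
  have "h (?a (g pinf)) = h p0" "h (?a (g' pinf)) = h p0"
    using gh gh' swap root_group_fixes[OF gh(2)] \<open>h = h'\<close> by simp_all
  then have "?a (g pinf) = ?a (g' pinf)"
    using bij_is_inj[OF root_group_bij[OF gh(2)]] by (simp add: inj_eq)
  then have "g pinf = g' pinf"
    using bij_is_inj[OF root_group_bij[OF a(1)]] by (simp add: inj_eq)
  then have "g = g'" by (rule root_group_eqI[OF gh(1) gh'(1) basis])
  then show ?thesis using gh gh' \<open>h = h'\<close> by simp
qed

lemma is_mu_ex1: "is_unit sim p0 pinf x \<Longrightarrow> \<exists>!m. is_mu U p0 pinf x m"
  using is_mu_exists is_mu_unique by (metis ex1I)

lemma is_mu_mu: "is_unit sim p0 pinf x \<Longrightarrow> is_mu U p0 pinf x (mu U p0 pinf x)"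
  unfolding mu_is_the_mu by (rule theI'[OF is_mu_ex1])

lemma mu_eqI: "is_unit sim p0 pinf x \<Longrightarrow> is_mu U p0 pinf x m \<Longrightarrow> mu U p0 pinf x = m"
  unfolding mu_is_the_mu by (rule the1_equality[OF is_mu_ex1])

lemma mu_SymRel:
  assumes "is_unit sim p0 pinf x"
  shows "mu U p0 pinf x \<in> SymRel sim"
proof -
  obtain g h where g: "g \<in> U p0" and h: "h \<in> U p0"
    and mu: "mu U p0 pinf x = h \<circ> alpha U p0 pinf x \<circ> g"
    using is_mu_mu[OF assms] by (auto simp: is_mu_def)
  have a: "alpha U p0 pinf x \<in> U pinf"
    using assms alpha_mem by (simp add: is_unit_def)
  show ?thesis unfolding mu
    by (intro SymRel_comp root_group_SymRel[OF g] root_group_SymRel[OF a] root_group_SymRel[OF h])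
qed

lemma hua_generator_bij: "s \<in> hua_generators sim U p0 pinf \<Longrightarrow> bij s"
  using mu_SymRel by (auto simp: hua_generators_def SymRel_def intro: bij_comp)

end

locale lm_homomorphism =
  fixes sim1 :: "'a \<Rightarrow> 'a \<Rightarrow> bool" and U :: "'a \<Rightarrow> ('a \<Rightarrow> 'a) set"
    and sim2 :: "'b \<Rightarrow> 'b \<Rightarrow> bool" and V :: "'b \<Rightarrow> ('b \<Rightarrow> 'b) set"
    and phi :: "'a \<Rightarrow> 'b"
  assumes lm_hom: "lm_hom sim1 U sim2 V phi"
begin

sublocale M1: local_moufang_set sim1 U
  using lm_hom by unfold_locales (simp add: lm_hom_def)

sublocale M2: local_moufang_set sim2 V
  using lm_hom by unfold_locales (simp add: lm_hom_def)

lemma sim_iff: "sim2 (phi a) (phi b) \<longleftrightarrow> sim1 a b"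
  using lm_hom by (simp add: lm_hom_def)

lemma intertwining_exists: "u \<in> U x \<Longrightarrow> \<exists>v\<in>V (phi x). phi \<circ> u = v \<circ> phi"
  using lm_hom by (simp add: lm_hom_def)

lemma theta_prop_eq:
  assumes "theta_prop U V phi x t" "theta_prop U V phi x t'"
  shows "t = t'"
proof
  have t: "t \<in> U x \<rightarrow>\<^sub>E V (phi x)" "\<And>z u. u \<in> U x \<Longrightarrow> phi (u z) = t u (phi z)"
    using assms(1) unfolding theta_prop_def by blast+
  have t': "t' \<in> U x \<rightarrow>\<^sub>E V (phi x)" "\<And>z u. u \<in> U x \<Longrightarrow> phi (u z) = t' u (phi z)"
    using assms(2) unfolding theta_prop_def by blast+
  fix u
  show "t u = t' u"
  proof (cases "u \<in> U x")
    case True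
    obtain z where "\<not> sim1 x z" using M1.exists_not_sim by blast
    then have "\<not> sim2 (phi x) (phi z)" by (simp add: sim_iff)
    moreover have "t u (phi z) = t' u (phi z)"
      using t(2)[OF True, of z] t'(2)[OF True, of z] by simp
    ultimately show ?thesis
      using M2.root_group_eqI PiE_mem[OF t(1) True] PiE_mem[OF t'(1) True] by blast
  next
    case False
    then show ?thesis using PiE_arb[OF t(1)] PiE_arb[OF t'(1)] by simp
  qed
qed

lemma theta_prop_ex1: "\<exists>!t. theta_prop U V phi x t"
proof -
  define t where "t = (\<lambda>u\<in>U x. SOME v. v \<in> V (phi x) \<and> phi \<circ> u = v \<circ> phi)"
  have t: "t u \<in> V (phi x) \<and> phi \<circ> u = t u \<circ> phi" if "u \<in> U x" for u
    using someI_ex[OF intertwining_exists[OF that, unfolded Bex_def]] that by (simp add: t_def)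
  have tp: "theta_prop U V phi x t"
    unfolding theta_prop_def
  proof (intro conjI allI ballI)
    show "t \<in> U x \<rightarrow>\<^sub>E V (phi x)"
      using t unfolding t_def by (simp add: restrict_PiE_iff)
    show "phi (u z) = t u (phi z)" if "u \<in> U x" for z u
      using t[OF that] by (simp add: fun_eq_iff)
  qed
  show ?thesis
    by (rule ex1I[of "theta_prop U V phi x", OF tp theta_prop_eq[OF _ tp]])
qed

lemma theta_prop_theta: "theta_prop U V phi x (theta U V phi x)"
  unfolding theta_def by (rule theI'[OF theta_prop_ex1])

lemma theta_mem: "u \<in> U x \<Longrightarrow> theta U V phi x u \<in> V (phi x)"
  using theta_prop_theta[of x] unfolding theta_prop_def by blast

lemma theta_apply: "u \<in> U x \<Longrightarrow> phi (u z) = theta U V phi x u (phi z)"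
  using theta_prop_theta[of x] unfolding theta_prop_def by blast

lemma theta_eqI:
  assumes "u \<in> U x" "v \<in> V (phi x)" "\<not> sim1 x x'" "phi (u x') = v (phi x')"
  shows "v = theta U V phi x u"
proof (rule M2.root_group_eqI)
  show "\<not> sim2 (phi x) (phi x')" using assms(3) by (simp add: sim_iff)
  show "v (phi x') = theta U V phi x u (phi x')"
    using assms(4) theta_apply[OF assms(1)] by simp
qed (fact assms(2), fact theta_mem[OF assms(1)])

lemma theta_comp:
  assumes "u1 \<in> U x" "u2 \<in> U x"
  shows "theta U V phi x (u2 \<circ> u1) = theta U V phi x u2 \<circ> theta U V phi x u1"
proof -
  obtain z where z: "\<not> sim1 x z" using M1.exists_not_sim by blast
  have "theta U V phi x u2 \<circ> theta U V phi x u1 \<in> V (phi x)"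
    using assms by (intro M2.root_group_comp theta_mem)
  moreover have "phi ((u2 \<circ> u1) z) = (theta U V phi x u2 \<circ> theta U V phi x u1) (phi z)"
    using theta_apply[OF assms(1)] theta_apply[OF assms(2)] by simp
  ultimately show ?thesis
    using theta_eqI[OF M1.root_group_comp[OF assms] _ z] by simp
qed

end

locale lm_homomorphism_basis = lm_homomorphism +
  fixes p0 pinf :: 'a
  assumes basis: "\<not> sim1 p0 pinf"
begin

sublocale B1: local_moufang_basis sim1 U p0 pinf
  by unfold_locales (fact basis)

sublocale B2: local_moufang_basis sim2 V "phi p0" "phi pinf"
  by unfold_locales (simp add: sim_iff basis)

lemma theta_alpha:
  assumes "\<not> sim1 x pinf"
  shows "theta U V phi pinf (alpha U p0 pinf x) = alpha V (phi p0) (phi pinf) (phi x)"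
proof (rule sym, rule B2.alpha_eqI)
  show "\<not> sim2 (phi x) (phi pinf)" using assms by (simp add: sim_iff)
  show "theta U V phi pinf (alpha U p0 pinf x) \<in> V (phi pinf)"
    using assms by (intro theta_mem B1.alpha_mem)
  show "theta U V phi pinf (alpha U p0 pinf x) (phi p0) = phi x"
    using theta_apply[OF B1.alpha_mem[OF assms]] B1.alpha_zero[OF assms] by metis
qed

lemma neg_hom:
  assumes "\<not> sim1 x pinf"
  shows "phi (neg U p0 pinf x) = neg V (phi p0) (phi pinf) (phi x)"
proof -
  let ?b = "alpha V (phi p0) (phi pinf) (phi x)"
  have "\<not> sim2 (phi x) (phi pinf)" using assms by (simp add: sim_iff)
  then have inj: "inj ?b" by (rule bij_is_inj[OF M2.root_group_bij[OF B2.alpha_mem]])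
  have "?b (phi (neg U p0 pinf x)) = phi (alpha U p0 pinf x (neg U p0 pinf x))"
    using theta_apply[OF B1.alpha_mem[OF assms]] theta_alpha[OF assms] by simp
  also have "\<dots> = ?b (neg V (phi p0) (phi pinf) (phi x))"
    using B1.alpha_neg[OF assms] B2.alpha_neg assms by (simp add: sim_iff)
  finally show ?thesis by (rule injD[OF inj])
qed

lemma is_unit_hom: "is_unit sim1 p0 pinf x \<Longrightarrow> is_unit sim2 (phi p0) (phi pinf) (phi x)"
  by (simp add: is_unit_def sim_iff)

lemma mu_hom_factor:
  assumes "is_unit sim1 p0 pinf x" "g \<in> U p0" "h \<in> U p0"
    and mu: "mu U p0 pinf x = h \<circ> alpha U p0 pinf x \<circ> g"
  shows "mu V (phi p0) (phi pinf) (phi x) =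
    theta U V phi p0 h \<circ> alpha V (phi p0) (phi pinf) (phi x) \<circ> theta U V phi p0 g"
    and "phi \<circ> mu U p0 pinf x = mu V (phi p0) (phi pinf) (phi x) \<circ> phi"
proof -
  let ?m = "theta U V phi p0 h \<circ> alpha V (phi p0) (phi pinf) (phi x) \<circ> theta U V phi p0 g"
  have x: "\<not> sim1 x pinf" using assms(1) by (simp add: is_unit_def)
  have intertwines: "phi \<circ> mu U p0 pinf x = ?m \<circ> phi"
  proof
    fix z
    show "(phi \<circ> mu U p0 pinf x) z = (?m \<circ> phi) z"
      using theta_apply[OF assms(2)] theta_apply[OF assms(3)]
        theta_apply[OF B1.alpha_mem[OF x]] theta_alpha[OF x] mu by simp
  qed
  have "is_mu V (phi p0) (phi pinf) (phi x) ?m"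
    unfolding is_mu_def
  proof (intro conjI)
    show "\<exists>g'\<in>V (phi p0). \<exists>h'\<in>V (phi p0). ?m = h' \<circ> alpha V (phi p0) (phi pinf) (phi x) \<circ> g'"
      using assms(2,3) theta_mem by blast
    have "mu U p0 pinf x p0 = pinf" "mu U p0 pinf x pinf = p0"
      using B1.is_mu_mu[OF assms(1)] by (simp_all add: is_mu_def)
    then show "?m (phi p0) = phi pinf" "?m (phi pinf) = phi p0"
      using intertwines by (metis comp_apply)+
  qed
  then show mu': "mu V (phi p0) (phi pinf) (phi x) = ?m"
    using B2.mu_eqI is_unit_hom[OF assms(1)] by blast
  show "phi \<circ> mu U p0 pinf x = mu V (phi p0) (phi pinf) (phi x) \<circ> phi"
    unfolding mu' by (fact intertwines)
qed

lemma mu_hom: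
  assumes "is_unit sim1 p0 pinf x"
  shows "phi \<circ> mu U p0 pinf x = mu V (phi p0) (phi pinf) (phi x) \<circ> phi"
proof -
  obtain g h where "g \<in> U p0" "h \<in> U p0" "mu U p0 pinf x = h \<circ> alpha U p0 pinf x \<circ> g"
    using B1.is_mu_mu[OF assms] unfolding is_mu_def by blast
  then show ?thesis by (rule mu_hom_factor(2)[OF assms])
qed

lemma tilde_hom:
  assumes "is_unit sim1 p0 pinf x"
  shows "phi (tilde U p0 pinf x) = tilde V (phi p0) (phi pinf) (phi x)"
proof -
  let ?y = "mu U p0 pinf x (neg U p0 pinf x)"
  have x: "\<not> sim1 x pinf" using assms by (simp add: is_unit_def)
  \<comment> \<open>\<open>mu x\<close> maps the class of \<open>p0\<close> to that of \<open>pinf\<close>, and \<open>neg x\<close> is a unit\<close>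
  have "\<not> sim1 ?y pinf"
  proof -
    have "mu U p0 pinf x p0 = pinf"
      using B1.is_mu_mu[OF assms] by (simp add: is_mu_def)
    moreover have "\<not> sim1 (neg U p0 pinf x) p0"
      using B1.is_unit_neg[OF assms] by (simp add: is_unit_def)
    ultimately show ?thesis
      using B1.mu_SymRel[OF assms] unfolding SymRel_def by force
  qed
  then have "phi (tilde U p0 pinf x) = neg V (phi p0) (phi pinf) (phi ?y)"
    unfolding tilde_def by (rule neg_hom)
  also have "phi ?y = mu V (phi p0) (phi pinf) (phi x) (neg V (phi p0) (phi pinf) (phi x))"
    using mu_hom[OF assms] neg_hom[OF x] by (metis comp_apply)
  finally show ?thesis unfolding tilde_def .
qed

lemma hua_hom: "h \<in> hua sim1 U p0 pinf \<Longrightarrow> \<exists>h'\<in>hua sim2 V (phi p0) (phi pinf). phi \<circ> h = h' \<circ> phi"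
  unfolding hua_gen_hua_generators
proof (rule gen_intertwining[OF B1.hua_generator_bij B2.hua_generator_bij])
  fix s assume "s \<in> hua_generators sim1 U p0 pinf"
  then obtain x y where x: "is_unit sim1 p0 pinf x" and y: "is_unit sim1 p0 pinf y"
    and s: "s = mu U p0 pinf y \<circ> mu U p0 pinf x"
    unfolding hua_generators_def by blast
  then have "mu V (phi p0) (phi pinf) (phi y) \<circ> mu V (phi p0) (phi pinf) (phi x)
      \<in> hua_generators sim2 V (phi p0) (phi pinf)"
    unfolding hua_generators_def using is_unit_hom by blast
  moreover have "phi \<circ> s = (mu V (phi p0) (phi pinf) (phi y) \<circ> mu V (phi p0) (phi pinf) (phi x)) \<circ> phi"
    using mu_hom[OF x] mu_hom[OF y] by (simp add: s fun_eq_iff)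
  ultimately show "\<exists>t\<in>hua_generators sim2 V (phi p0) (phi pinf). phi \<circ> s = t \<circ> phi" by blast
qed

end

theorem mainTheorem8:
  fixes sim1 :: "'a \<Rightarrow> 'a \<Rightarrow> bool" and U :: "'a \<Rightarrow> ('a \<Rightarrow> 'a) set"
    and sim2 :: "'b \<Rightarrow> 'b \<Rightarrow> bool" and V :: "'b \<Rightarrow> ('b \<Rightarrow> 'b) set"
    and phi :: "'a \<Rightarrow> 'b"
  assumes hom: "lm_hom sim1 U sim2 V phi"
  shows
    "(\<forall>x. (\<exists>!th. theta_prop U V phi x th) \<and> theta_prop U V phi x (theta U V phi x) \<and>
         (\<forall>u1\<in>U x. \<forall>u2\<in>U x. theta U V phi x (u2 \<circ> u1) = theta U V phi x u2 \<circ> theta U V phi x u1))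
   \<and> (\<forall>x. \<forall>u\<in>U x. \<forall>v\<in>V (phi x). \<forall>x'. \<not> sim1 x x' \<longrightarrow> phi (u x') = v (phi x')
         \<longrightarrow> v = theta U V phi x u)
   \<and> (\<forall>p0 pinf q0 qinf. \<not> sim1 p0 pinf \<longrightarrow> \<not> sim2 q0 qinf \<longrightarrow> phi p0 = q0 \<longrightarrow> phi pinf = qinf \<longrightarrow>
       (\<forall>x. \<not> sim1 x pinf \<longrightarrow>
          theta U V phi pinf (alpha U p0 pinf x) = alpha V q0 qinf (phi x) \<and>
          phi (neg U p0 pinf x) = neg V q0 qinf (phi x))
     \<and> (\<forall>x. is_unit sim1 p0 pinf x \<longrightarrow>
          is_unit sim2 q0 qinf (phi x) \<and>
          phi \<circ> mu U p0 pinf x = mu V q0 qinf (phi x) \<circ> phi \<and>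
          (\<forall>g\<in>U p0. \<forall>h\<in>U p0. mu U p0 pinf x = h \<circ> alpha U p0 pinf x \<circ> g \<longrightarrow>
             mu V q0 qinf (phi x) = theta U V phi p0 h \<circ> alpha V q0 qinf (phi x) \<circ> theta U V phi p0 g))
     \<and> (\<forall>x. is_unit sim1 p0 pinf x \<longrightarrow> phi (tilde U p0 pinf x) = tilde V q0 qinf (phi x))
     \<and> (\<forall>h\<in>hua sim1 U p0 pinf. \<exists>h'\<in>hua sim2 V q0 qinf. phi \<circ> h = h' \<circ> phi))"
proof -
  interpret lm_homomorphism sim1 U sim2 V phi
    by (fact lm_homomorphism.intro[OF hom])
  have basis: "lm_homomorphism_basis sim1 U sim2 V phi p0 pinf" if "\<not> sim1 p0 pinf" for p0 pinf
    by (intro lm_homomorphism_basis.intro lm_homomorphism.intro lm_homomorphism_basis_axioms.intro hom that)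
  show ?thesis
    apply (intro conjI allI ballI impI)
    subgoal by (fact theta_prop_ex1)
    subgoal by (fact theta_prop_theta)
    subgoal by (rule theta_comp)
    subgoal by (rule theta_eqI)
    subgoal premises P
      using lm_homomorphism_basis.theta_alpha[OF basis[OF P(1)] P(5)] unfolding P(3,4) .
    subgoal premises P
      using lm_homomorphism_basis.neg_hom[OF basis[OF P(1)] P(5)] unfolding P(3,4) .
    subgoal premises P
      using lm_homomorphism_basis.is_unit_hom[OF basis[OF P(1)] P(5)] unfolding P(3,4) .
    subgoal premises P
      using lm_homomorphism_basis.mu_hom[OF basis[OF P(1)] P(5)] unfolding P(3,4) .
    subgoal premises P
      using lm_homomorphism_basis.mu_hom_factor(1)[OF basis[OF P(1)] P(5-8)] unfolding P(3,4) .
    subgoal premises P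
      using lm_homomorphism_basis.tilde_hom[OF basis[OF P(1)] P(5)] unfolding P(3,4) .
    subgoal premises P
      using lm_homomorphism_basis.hua_hom[OF basis[OF P(1)] P(5)] unfolding P(3,4) .
    done
qed

end
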